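(* Let $K\subset\mathbb{R}^n$ be a nonempty compact set and $H$ a linear subspace of $\mathbb{R}^n$ with $1\le\dim H\le n-1$. Then the sequence $K_m:=M_H^mK$ ($M_H$ applied $m$ times) converges in the Hausdorff metric to the $H$-symmetric compact convex set \[L=\mathrm{conv}(M_HK).\]
   Context: For a linear subspace $H$, $R_Hx=2(x|H)-x$ is the reflection with respect to $H$ ($x|H$ the orthogonal projection). The Minkowski symmetrization is $M_HC:=\frac12(C+R_HC)$, with Minkowski sum $X+Y=\{x+y:x\in X,y\in Y\}$ and $tX=\{tx:x\in X\}$. $M_H^m=M_H\circ\cdots\circ M_H$ ($m$ times). $\mathrm{conv}$ denotes convex hull. *)

theory Defs
  imports "HOL-Analysis.Analysis"
begin

definition orth_proj :: "'a::euclidean_space set \<Rightarrow> 'a \<Rightarrow> 'a" where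
  "orth_proj H x = (THE y. y \<in> H \<and> (\<forall>h\<in>H. (x - y) \<bullet> h = 0))"

definition refl_sub :: "'a::euclidean_space set \<Rightarrow> 'a \<Rightarrow> 'a" where
  "refl_sub H x = 2 *\<^sub>R orth_proj H x - x"

definition mink_sum :: "'a::real_vector set \<Rightarrow> 'a set \<Rightarrow> 'a set" where
  "mink_sum X Y = {x + y | x y. x \<in> X \<and> y \<in> Y}"

definition set_scale :: "real \<Rightarrow> 'a::real_vector set \<Rightarrow> 'a set" where
  "set_scale t X = {t *\<^sub>R x | x. x \<in> X}"

definition mink_sym :: "'a::euclidean_space set \<Rightarrow> 'a set \<Rightarrow> 'a set" where
  "mink_sym H C = set_scale (1/2) (mink_sum C (refl_sub H ` C))"

definition hausdorff_dist :: "'a::metric_space set \<Rightarrow> 'a set \<Rightarrow> real" where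
  "hausdorff_dist A B = max (SUP a\<in>A. infdist a B) (SUP b\<in>B. infdist b A)"

end

theory Submission
  imports Defs
begin

text \<open>
  Write \<open>B = M\<^sub>H K\<close>. Since \<open>R\<^sub>H B = B\<close>, the compact convex set \<open>conv B\<close> is
  \<open>R\<^sub>H\<close>-invariant, so \<open>M\<^sub>H\<close> maps its subsets into it and \<open>M\<^sub>H\<^bsup>m\<^esup> K \<subseteq> conv B\<close>
  for \<open>m \<ge> 1\<close>. Conversely, \<open>M\<^sub>H\<^bsup>n+1\<^esup> K\<close> contains every average of \<open>2\<^sup>n\<close> points of \<open>B\<close>:
  split the average into two halves and reflect the second one, using \<open>R\<^sub>H B = B\<close> again.
  By Caratheodory a point of \<open>conv B \<subseteq> \<real>\<^sup>d\<close> is a convex combination of at most \<open>d + 1\<close>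
  points of \<open>B\<close>; rounding its weights down to multiples of \<open>1/N\<close> puts it within
  \<open>2(d + 1)r/N\<close> of an average of \<open>N\<close> points of \<open>B\<close>, where \<open>r\<close> bounds the norms on \<open>B\<close>.
  Hence the Hausdorff distance from \<open>M\<^sub>H\<^bsup>n+1\<^esup> K\<close> to \<open>conv B\<close> is \<open>O(2\<^sup>-\<^sup>n)\<close>.
\<close>

lemma orth_proj_residual_unique:
  fixes H :: "'a::euclidean_space set"
  assumes "subspace H"
    and "y \<in> H" "\<forall>h\<in>H. (x - y) \<bullet> h = 0"
    and "y' \<in> H" "\<forall>h\<in>H. (x - y') \<bullet> h = 0"
  shows "y' = y"
proof -
  have "y - y' \<in> H"
    using assms by (simp add: subspace_diff)
  then have "(y - y') \<bullet> (y - y') = (x - y') \<bullet> (y - y') - (x - y) \<bullet> (y - y')"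
    by (simp add: algebra_simps inner_diff_left)
  also have "\<dots> = 0"
    using assms \<open>y - y' \<in> H\<close> by simp
  finally show ?thesis
    by simp
qed

lemma orth_proj_eqI:
  fixes H :: "'a::euclidean_space set"
  assumes "subspace H" "y \<in> H" "\<forall>h\<in>H. (x - y) \<bullet> h = 0"
  shows "orth_proj H x = y"
  unfolding orth_proj_def
  using assms by (intro the_equality) (auto intro: orth_proj_residual_unique)

lemma orth_proj:
  fixes H :: "'a::euclidean_space set"
  assumes "subspace H"
  shows "orth_proj H x \<in> H \<and> (\<forall>h\<in>H. (x - orth_proj H x) \<bullet> h = 0)"
proof -
  obtain y z where "y \<in> span H" "\<And>w. w \<in> span H \<Longrightarrow> orthogonal z w" "x = y + z"
    using orthogonal_subspace_decomp_exists by blast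
  moreover have "span H = H"
    using assms by (simp add: span_eq_iff)
  ultimately have "y \<in> H" "\<forall>h\<in>H. (x - y) \<bullet> h = 0"
    by (auto simp: orthogonal_def span_base)
  then show ?thesis
    using orth_proj_eqI[OF assms] by simp
qed

lemma orth_proj_id:
  fixes H :: "'a::euclidean_space set"
  assumes "subspace H" "y \<in> H"
  shows "orth_proj H y = y"
  using assms by (intro orth_proj_eqI) auto

lemma linear_orth_proj:
  fixes H :: "'a::euclidean_space set"
  assumes "subspace H"
  shows "linear (orth_proj H)"
proof (rule linearI)
  fix x y :: 'a and c :: real
  note px = orth_proj[OF assms, of x] and py = orth_proj[OF assms, of y]
  show "orth_proj H (x + y) = orth_proj H x + orth_proj H y"
    using px py assms
    by (intro orth_proj_eqI) (auto simp: subspace_add algebra_simps inner_diff_left inner_add_left)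
  show "orth_proj H (c *\<^sub>R x) = c *\<^sub>R orth_proj H x"
    using px assms
    by (intro orth_proj_eqI) (auto simp: subspace_scale inner_diff_left simp flip: scaleR_diff_right)
qed

lemma linear_refl_sub:
  fixes H :: "'a::euclidean_space set"
  assumes "subspace H"
  shows "linear (refl_sub H)"
  unfolding refl_sub_def
  by (intro linear_compose_sub linear_compose_scale_right linear_orth_proj assms linear_ident)

lemma refl_sub_refl_sub:
  fixes H :: "'a::euclidean_space set"
  assumes "subspace H"
  shows "refl_sub H (refl_sub H x) = x"
proof -
  have "orth_proj H (refl_sub H x) = orth_proj H x"
    using orth_proj[OF assms, of x]
    by (simp add: refl_sub_def linear_diff[OF linear_orth_proj[OF assms]]
        linear_add[OF linear_orth_proj[OF assms]] orth_proj_id[OF assms] scaleR_2)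
  then show ?thesis
    by (simp add: refl_sub_def algebra_simps)
qed

lemma mink_sym_eq_image:
  "mink_sym H C = (\<lambda>(x, y). (1/2) *\<^sub>R (x + refl_sub H y)) ` (C \<times> C)"
  unfolding mink_sym_def set_scale_def mink_sum_def by force

lemma refl_sub_image_mink_sym:
  fixes H :: "'a::euclidean_space set"
  assumes "subspace H"
  shows "refl_sub H ` mink_sym H C = mink_sym H C"
proof (rule subset_antisym)
  have swap: "refl_sub H ((1/2) *\<^sub>R (x + refl_sub H y)) = (1/2) *\<^sub>R (y + refl_sub H x)" for x y
    using refl_sub_refl_sub[OF assms]
    by (simp add: linear_scale[OF linear_refl_sub[OF assms]]
        linear_add[OF linear_refl_sub[OF assms]] add.commute)
  show sub: "refl_sub H ` mink_sym H C \<subseteq> mink_sym H C"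
    unfolding mink_sym_eq_image by (auto simp: swap)
  have "mink_sym H C = refl_sub H ` refl_sub H ` mink_sym H C"
    by (simp add: image_image refl_sub_refl_sub[OF assms])
  also have "\<dots> \<subseteq> refl_sub H ` mink_sym H C"
    using sub by (rule image_mono)
  finally show "mink_sym H C \<subseteq> refl_sub H ` mink_sym H C" .
qed

lemma refl_sub_image_convex_hull_mink_sym:
  fixes H :: "'a::euclidean_space set"
  assumes "subspace H"
  shows "refl_sub H ` (convex hull mink_sym H C) = convex hull mink_sym H C"
  by (metis convex_hull_linear_image linear_refl_sub refl_sub_image_mink_sym assms)

lemma compact_mink_sym:
  fixes H C :: "'a::euclidean_space set"
  assumes "subspace H" "compact C"
  shows "compact (mink_sym H C)"
proof -
  have R: "continuous_on UNIV (refl_sub H)"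
    using linear_refl_sub[OF assms(1)] by (simp add: linear_continuous_on linear_conv_bounded_linear)
  have "continuous_on (C \<times> C) (\<lambda>(x, y). (1/2) *\<^sub>R (x + refl_sub H y))"
    unfolding case_prod_unfold by (intro continuous_intros continuous_on_compose2[OF R]) auto
  then show ?thesis
    unfolding mink_sym_eq_image using assms(2) by (intro compact_continuous_image compact_Times)
qed

lemma mink_sym_subset:
  fixes H :: "'a::euclidean_space set"
  assumes "convex L" "refl_sub H ` L \<subseteq> L" "C \<subseteq> L"
  shows "mink_sym H C \<subseteq> L"
proof
  fix t assume "t \<in> mink_sym H C"
  then obtain x y where "x \<in> C" "y \<in> C" and t: "t = (1/2) *\<^sub>R x + (1/2) *\<^sub>R refl_sub H y"
    by (auto simp: mink_sym_eq_image scaleR_right_distrib)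
  then have "x \<in> L" "refl_sub H y \<in> L"
    using assms(2,3) by auto
  then show "t \<in> L"
    unfolding t by (intro convexD[OF assms(1)]) auto
qed

lemma mink_sym_iterate_subset_convex_hull:
  fixes H K :: "'a::euclidean_space set"
  assumes "subspace H"
  shows "(mink_sym H ^^ Suc n) K \<subseteq> convex hull mink_sym H K"
proof (induction n)
  case 0
  show ?case by (simp add: hull_subset)
next
  case (Suc n)
  have "mink_sym H ((mink_sym H ^^ Suc n) K) \<subseteq> convex hull mink_sym H K"
    using refl_sub_image_convex_hull_mink_sym[OF assms] Suc
    by (intro mink_sym_subset convex_convex_hull) auto
  then show ?case
    by simp
qed

lemma set_sum_lessThan_add:
  fixes m n :: nat and B :: "'a::comm_monoid_add set"
  shows "(\<Sum>i<m + n. B) = (\<Sum>i<m. B) + (\<Sum>i<n. B)"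
  by (induction n) (simp_all add: add.assoc)

lemma scaleR_of_nat_in_set_sum:
  fixes B :: "'a::real_vector set"
  assumes "b \<in> B"
  shows "of_nat k *\<^sub>R b \<in> (\<Sum>i<k. B)"
proof (induction k)
  case 0
  show ?case by simp
next
  case (Suc k)
  have "of_nat (Suc k) *\<^sub>R b = of_nat k *\<^sub>R b + b"
    by (simp add: algebra_simps)
  also have "\<dots> \<in> (\<Sum>i<k. B) + B"
    using Suc assms by (rule set_plus_intro)
  finally show ?case by simp
qed

lemma weighted_sum_in_set_sum:
  fixes B :: "'a::real_vector set"
  assumes "finite S" "S \<subseteq> B"
  shows "(\<Sum>x\<in>S. of_nat (k x) *\<^sub>R x) \<in> (\<Sum>i<sum k S. B)"
  using assms
proof (induction S rule: finite_induct)
  case empty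
  show ?case by simp
next
  case (insert x S)
  then have "(\<Sum>x\<in>insert x S. of_nat (k x) *\<^sub>R x) \<in> (\<Sum>i<k x. B) + (\<Sum>i<sum k S. B)"
    by (auto intro: set_plus_intro scaleR_of_nat_in_set_sum)
  then show ?case
    using insert.hyps by (simp add: set_sum_lessThan_add)
qed

lemma linear_image_set_plus:
  assumes "linear f"
  shows "f ` (A + B) = f ` A + f ` B"
  unfolding set_plus_image image_image
  by (force simp: linear_add[OF assms] image_iff)

lemma linear_image_set_sum:
  assumes "linear f"
  shows "f ` (\<Sum>i\<in>I. A i) = (\<Sum>i\<in>I. f ` A i)"
  using sum_set_linear[of "image f" A I] linear_image_set_plus[OF assms] linear_0[OF assms]
  by (simp add: o_def)

text \<open>A set sum \<open>\<Sum>i<N. B\<close> is the \<open>N\<close>-fold Minkowski sum \<open>B + \<dots> + B\<close> (\<open>Set_Algebras\<close>).\<close>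

definition averages :: "nat \<Rightarrow> 'a::real_vector set \<Rightarrow> 'a set" where
  "averages N B = (\<lambda>s. s /\<^sub>R real N) ` (\<Sum>i<N. B)"

lemma averages_nonempty:
  assumes "B \<noteq> {}"
  shows "averages N B \<noteq> {}"
proof -
  obtain b where "b \<in> B" using assms by blast
  then show ?thesis
    unfolding averages_def using scaleR_of_nat_in_set_sum by blast
qed

lemma averages_subset_mink_sym:
  fixes H B C :: "'a::euclidean_space set"
  assumes H: "subspace H" and "refl_sub H ` B = B" and "averages N B \<subseteq> C"
  shows "averages (2 * N) B \<subseteq> mink_sym H C"
proof
  have R: "linear (refl_sub H)"
    using H by (rule linear_refl_sub)
  have R_sum: "refl_sub H ` (\<Sum>i<N. B) = (\<Sum>i<N. B)"
    using assms(2) by (simp add: linear_image_set_sum[OF R])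
  fix t assume "t \<in> averages (2 * N) B"
  then obtain s where "s \<in> (\<Sum>i<N + N. B)" and t: "t = s /\<^sub>R real (N + N)"
    unfolding averages_def mult_2 by blast
  then obtain a b where a: "a \<in> (\<Sum>i<N. B)" and b: "b \<in> (\<Sum>i<N. B)" and s: "s = a + b"
    by (auto simp: set_sum_lessThan_add elim: set_plus_elim)
  define x where "x = a /\<^sub>R real N"
  define y where "y = refl_sub H (b /\<^sub>R real N)"
  have "x \<in> C" "y \<in> C"
    using a b R_sum assms(3)
    by (auto simp: x_def y_def averages_def linear_scale[OF R])
  moreover have "t = (1/2) *\<^sub>R (x + refl_sub H y)"
    by (simp add: t s x_def y_def refl_sub_refl_sub[OF H] scaleR_add_right)
  ultimately show "t \<in> mink_sym H C"
    unfolding mink_sym_eq_image by auto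
qed

lemma averages_subset_mink_sym_iterate:
  fixes H K :: "'a::euclidean_space set"
  assumes "subspace H"
  shows "averages (2 ^ n) (mink_sym H K) \<subseteq> (mink_sym H ^^ Suc n) K"
proof (induction n)
  case 0
  show ?case by (simp add: averages_def)
next
  case (Suc n)
  then have "averages (2 * 2 ^ n) (mink_sym H K) \<subseteq> mink_sym H ((mink_sym H ^^ Suc n) K)"
    using assms refl_sub_image_mink_sym[OF assms] by (intro averages_subset_mink_sym)
  then show ?case
    by simp
qed

lemma convex_hull_approx_by_averages:
  fixes B :: "'a::euclidean_space set"
  assumes r: "\<And>b. b \<in> B \<Longrightarrow> norm b \<le> r" and "l \<in> convex hull B" and "N > 0"
  shows "\<exists>a\<in>averages N B. dist l a \<le> 2 * real (DIM('a) + 1) * r / real N"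
proof -
  obtain S u where S: "finite S" "S \<subseteq> B" "card S \<le> DIM('a) + 1"
    and u: "\<forall>x\<in>S. 0 \<le> u x" "sum u S = 1" "(\<Sum>x\<in>S. u x *\<^sub>R x) = l"
    using assms(2) unfolding convex_hull_caratheodory by blast
  obtain b0 where b0: "b0 \<in> S"
    using u(2) by fastforce
  have "0 \<le> r"
    using b0 S(2) r[of b0] by (meson norm_ge_zero order_trans subsetD)
  define k where "k x = nat \<lfloor>real N * u x\<rfloor>" for x
  define e where "e x = u x - real (k x) / real N" for x
  have e: "0 \<le> e x" "e x \<le> 1 / real N" if "x \<in> S" for x
  proof -
    have "real (k x) \<le> real N * u x" "real N * u x - 1 \<le> real (k x)"
      using u(1) that by (auto simp: k_def)
    moreover have "e x = (real N * u x - real (k x)) / real N"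
      using \<open>N > 0\<close> by (simp add: e_def field_simps)
    ultimately show "0 \<le> e x" "e x \<le> 1 / real N"
      by (auto intro: divide_right_mono)
  qed
  have sum_e: "sum e S = 1 - real (sum k S) / real N"
    by (simp add: e_def sum_subtractf u(2) flip: sum_divide_distrib)
  moreover have "0 \<le> sum e S"
    using e(1) by (simp add: sum_nonneg)
  ultimately have "real (sum k S) / real N \<le> 1"
    by linarith
  then have "sum k S \<le> N"
    using \<open>N > 0\<close> by (simp add: divide_le_eq_1 del: of_nat_sum)
  \<comment> \<open>Round the weights down to multiples of \<open>1/N\<close> and give the missing mass to \<open>b0\<close>.\<close>
  define d where "d = N - sum k S"
  define s where "s = (\<Sum>x\<in>S. of_nat (k x) *\<^sub>R x) + of_nat d *\<^sub>R b0"
  have "s \<in> (\<Sum>i<sum k S. B) + (\<Sum>i<d. B)"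
    unfolding s_def using S b0 by (intro set_plus_intro weighted_sum_in_set_sum scaleR_of_nat_in_set_sum) auto
  then have "s \<in> (\<Sum>i<N. B)"
    using \<open>sum k S \<le> N\<close> by (simp add: d_def flip: set_sum_lessThan_add)
  then have avg: "s /\<^sub>R real N \<in> averages N B"
    unfolding averages_def by (rule imageI)
  have "real d / real N = sum e S"
    using \<open>sum k S \<le> N\<close> \<open>N > 0\<close> by (simp add: sum_e d_def of_nat_diff field_simps)
  moreover have "s /\<^sub>R real N = (\<Sum>x\<in>S. (real (k x) / real N) *\<^sub>R x) + (real d / real N) *\<^sub>R b0"
    by (simp add: s_def scaleR_add_right scaleR_sum_right divide_inverse_commute)
  ultimately have "l - s /\<^sub>R real N = (\<Sum>x\<in>S. e x *\<^sub>R x) - sum e S *\<^sub>R b0"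
    by (simp add: e_def u(3)[symmetric] scaleR_diff_left sum_subtractf)
  also have "\<dots> = (\<Sum>x\<in>S. e x *\<^sub>R (x - b0))"
    by (simp add: scaleR_diff_right sum_subtractf scaleR_sum_left)
  finally have "l - s /\<^sub>R real N = (\<Sum>x\<in>S. e x *\<^sub>R (x - b0))" .
  then have "dist l (s /\<^sub>R real N) \<le> (\<Sum>x\<in>S. e x * norm (x - b0))"
    using e(1) by (simp add: dist_norm) (rule order_trans[OF norm_sum], simp)
  also have "\<dots> \<le> (\<Sum>x\<in>S. 1 / real N * (2 * r))"
  proof (rule sum_mono)
    fix x assume "x \<in> S"
    then have "norm x \<le> r" "norm b0 \<le> r"
      using S(2) b0 r by auto
    then have "norm (x - b0) \<le> 2 * r"
      using norm_triangle_ineq4[of x b0] by linarith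
    then show "e x * norm (x - b0) \<le> 1 / real N * (2 * r)"
      using e[OF \<open>x \<in> S\<close>] by (intro mult_mono) auto
  qed
  also have "\<dots> = real (card S) * (2 * r) / real N"
    by simp
  also have "\<dots> \<le> real (DIM('a) + 1) * (2 * r) / real N"
    using S(3) \<open>0 \<le> r\<close>
    by (intro divide_right_mono mult_right_mono) (auto simp del: of_nat_Suc)
  finally show ?thesis
    using avg by (auto simp: ac_simps)
qed

lemma hausdorff_dist_le_of_subset:
  fixes C L :: "'a::metric_space set"
  assumes "C \<subseteq> L" "C \<noteq> {}" and near: "\<And>l. l \<in> L \<Longrightarrow> \<exists>c\<in>C. dist l c \<le> e"
  shows "0 \<le> hausdorff_dist C L" "hausdorff_dist C L \<le> e"
proof -
  have "(\<lambda>c. infdist c L) ` C = {0}"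
    using assms(1,2) by (force simp: infdist_zero)
  then have eq: "hausdorff_dist C L = max 0 (SUP l\<in>L. infdist l C)"
    by (simp add: hausdorff_dist_def)
  then show "0 \<le> hausdorff_dist C L"
    by simp
  have "infdist l C \<le> e" if "l \<in> L" for l
    using near[OF that] by (auto intro: infdist_le order_trans)
  moreover have "L \<noteq> {}"
    using assms(1,2) by blast
  ultimately have "(SUP l\<in>L. infdist l C) \<le> e" "0 \<le> e"
    by (auto intro: cSUP_least order_trans[OF infdist_nonneg])
  then show "hausdorff_dist C L \<le> e"
    unfolding eq by simp
qed

lemma hausdorff_dist_mink_sym_iterate_le:
  fixes H K :: "'a::euclidean_space set"
  assumes "subspace H" "K \<noteq> {}" and r: "\<And>b. b \<in> mink_sym H K \<Longrightarrow> norm b \<le> r"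
  defines "L \<equiv> convex hull mink_sym H K"
  shows "0 \<le> hausdorff_dist ((mink_sym H ^^ Suc n) K) L"
    and "hausdorff_dist ((mink_sym H ^^ Suc n) K) L \<le> 2 * real (DIM('a) + 1) * r / 2 ^ n"
proof -
  let ?C = "(mink_sym H ^^ Suc n) K"
  have avg: "averages (2 ^ n) (mink_sym H K) \<subseteq> ?C"
    using assms(1) by (rule averages_subset_mink_sym_iterate)
  have "mink_sym H K \<noteq> {}"
    using assms(2) by (auto simp: mink_sym_eq_image)
  then have ne: "?C \<noteq> {}"
    using avg averages_nonempty by blast
  have sub: "?C \<subseteq> L"
    unfolding L_def using assms(1) by (rule mink_sym_iterate_subset_convex_hull)
  have near: "\<exists>c\<in>?C. dist l c \<le> 2 * real (DIM('a) + 1) * r / 2 ^ n" if "l \<in> L" for l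
  proof -
    have "l \<in> convex hull mink_sym H K" "(0::nat) < 2 ^ n"
      using that by (simp_all add: L_def)
    then obtain a where "a \<in> averages (2 ^ n) (mink_sym H K)"
      and "dist l a \<le> 2 * real (DIM('a) + 1) * r / real (2 ^ n)"
      using convex_hull_approx_by_averages[OF r] by blast
    then show ?thesis
      using avg by auto
  qed
  show "0 \<le> hausdorff_dist ?C L" "hausdorff_dist ?C L \<le> 2 * real (DIM('a) + 1) * r / 2 ^ n"
    using hausdorff_dist_le_of_subset[OF sub ne near] by simp_all
qed

theorem theorem6:
  fixes K H :: "'a::euclidean_space set"
  assumes "compact K" and "K \<noteq> {}"
    and "subspace H" and "1 \<le> dim H" and "dim H \<le> DIM('a) - 1"
  shows "compact (convex hull (mink_sym H K))
       \<and> convex (convex hull (mink_sym H K))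
       \<and> refl_sub H ` (convex hull (mink_sym H K)) = convex hull (mink_sym H K)
       \<and> (\<lambda>m. hausdorff_dist ((mink_sym H ^^ m) K) (convex hull (mink_sym H K))) \<longlonglongrightarrow> 0"
proof -
  have "compact (mink_sym H K)"
    using assms(3,1) by (rule compact_mink_sym)
  then have "bounded (mink_sym H K)"
    by (rule compact_imp_bounded)
  then obtain r where r: "\<And>b. b \<in> mink_sym H K \<Longrightarrow> norm b \<le> r"
    by (auto simp: bounded_iff)
  note bounds = hausdorff_dist_mink_sym_iterate_le[OF assms(3,2) r]
  have lim0: "(\<lambda>n. 2 * real (DIM('a) + 1) * r / 2 ^ n) \<longlonglongrightarrow> 0"
    by (rule LIMSEQ_divide_realpow_zero) simp
  have "(\<lambda>n. hausdorff_dist ((mink_sym H ^^ Suc n) K) (convex hull mink_sym H K)) \<longlonglongrightarrow> 0"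
    by (rule tendsto_sandwich[OF _ _ tendsto_const lim0]) (use bounds in \<open>auto intro: always_eventually\<close>)
  then have "(\<lambda>m. hausdorff_dist ((mink_sym H ^^ m) K) (convex hull mink_sym H K)) \<longlonglongrightarrow> 0"
    by (rule LIMSEQ_imp_Suc)
  then show ?thesis
    using compact_convex_hull[OF \<open>compact (mink_sym H K)\<close>] refl_sub_image_convex_hull_mink_sym[OF assms(3)]
    by simp
qed

end
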